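(* Let $\Sigma$ be a finite alphabet and let $X,Y\subseteq\Sigma^{\mathbb{Z}}$ be constrained systems. Suppose that $X$ is primitive or $Y$ is primitive. Then the sequence $\left(\frac{1}{n}R(\mathscr{B}_n(X),\mathscr{B}_n(Y))\right)_{n\in\mathbb{N}}$ converges; that is, \[R(X,Y)=\lim_{n\to\infty}\frac{R(\mathscr{B}_n(X),\mathscr{B}_n(Y))}{n}.\]
   Context: $\Sigma^{\mathbb{Z}}$ carries the product topology (discrete on $\Sigma$) and the shift $T$, $(T\mathbf{x})_n=\mathbf{x}_{n+1}$. A constrained system is a set $X\subseteq\Sigma^{\mathbb{Z}}$ for which there is a finite directed graph $G=(V,E)$ with a labeling $L:E\to\Sigma$ such that $X$ is the set of label sequences $(L(e_i))_{i\in\mathbb{Z}}$ of bi-infinite directed paths $(e_i)_{i\in\mathbb{Z}}$ in $G$. A labeled graph is irreducible if any two vertices are joined by a directed path, and primitive if it is irreducible and the gcd of its cycle lengths is $1$ (equivalently, there is $n$ such that any two vertices are joined by a directed path of length exactly $n$). $X$ is primitive if it is presented by some primitive labeled graph. The language $\mathscr{B}_n(X)\subseteq\Sigma^n$ is the set of length-$n$ words appearing as consecutive subwords of some element of $X$. For $\overline{u},\overline{v}\in\Sigma^n$, $d(\overline{u},\overline{v})$ is the Hamming distance. For $A,C\subseteq\Sigma^n$, $R(C,A)=\max_{\overline{y}\in A}\min_{\overline{x}\in C}d(\overline{x},\overline{y})$. For shift spaces $X,Y$, $R(X,Y)=\liminf_{n\to\infty}\frac{1}{n}R(\mathscr{B}_n(X),\mathscr{B}_n(Y))$.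 *)

theory Defs
  imports "HOL-Analysis.Analysis" "HOL-Library.Liminf_Limsup"
begin

text \<open>A finite labeled directed graph: a finite vertex set V and a finite set of labeled
  edges (u, a, v) with u, v in V.  (Parallel edges with equal label are irrelevant for the
  presented system, so a set of triples suffices.)\<close>

definition labeled_graph :: "'v set \<Rightarrow> ('v \<times> 'a \<times> 'v) set \<Rightarrow> bool" where
  "labeled_graph V E \<longleftrightarrow> finite V \<and> finite E \<and> E \<subseteq> V \<times> UNIV \<times> V"

definition presented :: "('v \<times> 'a \<times> 'v) set \<Rightarrow> (int \<Rightarrow> 'a) set" where
  "presented E = {x. \<exists>p :: int \<Rightarrow> 'v. \<forall>i. (p i, x i, p (i + 1)) \<in> E}"

definition has_path :: "('v \<times> 'a \<times> 'v) set \<Rightarrow> nat \<Rightarrow> 'v \<Rightarrow> 'v \<Rightarrow> bool" where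
  "has_path E n u v \<longleftrightarrow> (\<exists>q :: nat \<Rightarrow> 'v. q 0 = u \<and> q n = v \<and>
      (\<forall>i<n. \<exists>a. (q i, a, q (Suc i)) \<in> E))"

definition irreducible_graph :: "'v set \<Rightarrow> ('v \<times> 'a \<times> 'v) set \<Rightarrow> bool" where
  "irreducible_graph V E \<longleftrightarrow> (\<forall>u\<in>V. \<forall>v\<in>V. \<exists>n. has_path E n u v)"

definition primitive_graph :: "'v set \<Rightarrow> ('v \<times> 'a \<times> 'v) set \<Rightarrow> bool" where
  "primitive_graph V E \<longleftrightarrow> irreducible_graph V E \<and>
     Gcd {n. n > 0 \<and> (\<exists>u\<in>V. has_path E n u u)} = (1::nat)"

definition constrained_system :: "(int \<Rightarrow> 'a) set \<Rightarrow> bool" where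
  "constrained_system X \<longleftrightarrow>
     (\<exists>(V :: nat set) E. labeled_graph V E \<and> X = presented E)"

definition primitive_system :: "(int \<Rightarrow> 'a) set \<Rightarrow> bool" where
  "primitive_system X \<longleftrightarrow>
     (\<exists>(V :: nat set) E. labeled_graph V E \<and> primitive_graph V E \<and> X = presented E)"

definition lang :: "(int \<Rightarrow> 'a) set \<Rightarrow> nat \<Rightarrow> 'a list set" where
  "lang X n = {map (\<lambda>i. x (k + int i)) [0..<n] | x k. x \<in> X}"

definition hamming :: "'a list \<Rightarrow> 'a list \<Rightarrow> nat" where
  "hamming u v = card {i. i < length u \<and> i < length v \<and> u ! i \<noteq> v ! i}"

definition covering_radius :: "'a list set \<Rightarrow> 'a list set \<Rightarrow> nat" where
  "covering_radius C A = Max ((\<lambda>y. Min ((\<lambda>x. hamming x y) ` C)) ` A)"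

definition R_shift :: "(int \<Rightarrow> 'a) set \<Rightarrow> (int \<Rightarrow> 'a) set \<Rightarrow> ereal" where
  "R_shift X Y = liminf (\<lambda>n. ereal (real (covering_radius (lang X n) (lang Y n)) / real n))"

end

(*
  Let R n be the covering radius of the length-n words of X by those of Y. Then R n <= n,
  R is nondecreasing and R (n + k) <= R n + k. In a primitive graph, paths of one fixed length m
  join any two vertices, so in a primitive system any two words can be joined by a word of
  length m. If Y is primitive, joining two words of Y that are far from X gives
  R a + R b <= R (a + m + b); if X is primitive, joining good approximations in X gives
  R (a + m + b) <= R a + R b + m, i.e. n - R n is superadditive up to the gap m. Either way a
  Fekete lemma for superadditive sequences with a gap shows that R n / n converges, and then the
  liminf defining R(X, Y) is this limit.
*)
theory Submission
  imports Defs
begin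

section \<open>Superadditive sequences with a gap\<close>

lemma superadditive_with_gap_multiple:
  fixes r :: "nat \<Rightarrow> nat"
  assumes superadd: "\<And>a b. r a + r b \<le> r (a + m + b)"
  shows "q * r k \<le> r (q * (k + m))"
proof (induction q)
  case (Suc q)
  have "Suc q * r k \<le> r (q * (k + m)) + r k" using Suc.IH by simp
  also have "\<dots> \<le> r (q * (k + m) + m + k)" by (rule superadd)
  also have "q * (k + m) + m + k = Suc q * (k + m)" by simp
  finally show ?case .
qed simp

lemma superadditive_with_gap_ratio_lower:
  fixes r :: "nat \<Rightarrow> nat"
  assumes bounded: "\<And>n. r n \<le> n" and "mono r"
    and superadd: "\<And>a b. r a + r b \<le> r (a + m + b)"
    and "n > 0"
  shows "real (r k) / real (k + m) - real (k + m) / real n \<le> real (r n) / real n"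
proof (cases "k + m = 0")
  case False
  define q where "q = n div (k + m)"
  have "q * r k \<le> r n"
    using superadditive_with_gap_multiple[OF superadd, of q k] monoD[OF \<open>mono r\<close>, of "q * (k + m)" n]
    by (simp add: q_def div_times_less_eq_dividend)
  then have qr: "real q * real (r k) \<le> real (r n)" by (metis of_nat_le_iff of_nat_mult)
  have "n < Suc q * (k + m)"
    using False by (simp add: q_def dividend_less_div_times)
  then have "real n \<le> (real q + 1) * real (k + m)"
    by (metis less_imp_le of_nat_le_iff of_nat_mult of_nat_Suc add.commute)
  then have nq: "real n / real (k + m) \<le> real q + 1"
    using False by (simp add: divide_le_eq)
  have "real n * (real (r k) / real (k + m)) = real n / real (k + m) * real (r k)" by simp
  also have "\<dots> \<le> (real q + 1) * real (r k)" using nq by (rule mult_right_mono) simp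
  also have "\<dots> \<le> real (r n) + real (k + m)" using qr bounded[of k] by (simp add: algebra_simps)
  finally have "real n * (real (r k) / real (k + m)) - real (k + m) \<le> real (r n)" by simp
  then have "(real n * (real (r k) / real (k + m)) - real (k + m)) / real n \<le> real (r n) / real n"
    by (rule divide_right_mono) simp
  then show ?thesis using \<open>n > 0\<close> by (simp add: diff_divide_distrib)
qed simp

lemma convergent_superadditive_with_gap:
  fixes r :: "nat \<Rightarrow> nat"
  assumes bounded: "\<And>n. r n \<le> n" and "mono r"
    and superadd: "\<And>a b. r a + r b \<le> r (a + m + b)"
  shows "convergent (\<lambda>n. real (r n) / real n)"
proof -
  \<comment> \<open>blocks of length k separated by gaps of length m tile [0, n)\<close>
  define f where "f k = real (r k) / real (k + m)" for k
  define L where "L = (SUP k. f k)"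
  have "f k \<le> 1" for k
    using bounded[of k] by (cases "k + m = 0") (auto simp: f_def divide_le_eq_1)
  then have bdd: "bdd_above (range f)" by (intro bdd_aboveI) auto
  have lower: "f k - real (k + m) / real n \<le> real (r n) / real n" if "n > 0" for n k
    unfolding f_def using superadditive_with_gap_ratio_lower[OF bounded \<open>mono r\<close> superadd that] .
  have upper: "real (r n) / real n \<le> L + real m / real n" if "n > 0" for n
  proof -
    have "real (r n) / real n - f n = real (r n) / real (n + m) * (real m / real n)"
      using that by (simp add: f_def field_simps)
    also have "\<dots> \<le> real m / real n"
      using bounded[of n] by (intro mult_left_le_one_le) (auto simp: divide_le_eq_1)
    finally have "real (r n) / real n - f n \<le> real m / real n" .
    moreover have "f n \<le> L" unfolding L_def by (rule cSUP_upper[OF _ bdd]) simp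
    ultimately show ?thesis by linarith
  qed
  have "(\<lambda>n. real (r n) / real n) \<longlonglongrightarrow> L"
  proof (rule order_tendstoI)
    fix a assume "a < L"
    then obtain k where k: "a < f k" unfolding L_def using less_cSUP_iff[OF _ bdd] by auto
    have "(\<lambda>n. f k - real (k + m) / real n) \<longlonglongrightarrow> f k"
      using tendsto_diff[OF tendsto_const lim_const_over_n] by simp
    then have "\<forall>\<^sub>F n in sequentially. a < f k - real (k + m) / real n"
      using k by (rule order_tendstoD)
    moreover have "\<forall>\<^sub>F n in sequentially. f k - real (k + m) / real n \<le> real (r n) / real n"
      using eventually_gt_at_top[of 0] by (rule eventually_mono) (rule lower)
    ultimately show "\<forall>\<^sub>F n in sequentially. a < real (r n) / real n"
      by eventually_elim (rule less_le_trans)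
  next
    fix a assume "L < a"
    have "(\<lambda>n. L + real m / real n) \<longlonglongrightarrow> L"
      using tendsto_add[OF tendsto_const lim_const_over_n] by simp
    then have "\<forall>\<^sub>F n in sequentially. L + real m / real n < a"
      using \<open>L < a\<close> by (rule order_tendstoD)
    moreover have "\<forall>\<^sub>F n in sequentially. real (r n) / real n \<le> L + real m / real n"
      using eventually_gt_at_top[of 0] by (rule eventually_mono) (rule upper)
    ultimately show "\<forall>\<^sub>F n in sequentially. real (r n) / real n < a"
      by eventually_elim (rule le_less_trans)
  qed
  then show ?thesis by (rule convergentI)
qed

section \<open>Additive submonoids of the naturals\<close>

lemma nat_eq_comb_consecutive:
  fixes n p :: nat
  assumes "p * p \<le> n"
  shows "n = (n div p - n mod p) * p + n mod p * (p + 1)"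
proof (cases "p = 0")
  case False
  then have "n mod p \<le> n div p"
    using assms by (meson less_eq_div_iff_mult_less_eq less_imp_le_nat mod_less_divisor neq0_conv order.strict_trans2)
  then have "(n div p - n mod p) * p + n mod p * (p + 1) = n div p * p + n mod p"
    by (simp add: algebra_simps diff_mult_distrib)
  then show ?thesis by simp
qed simp

locale add_submonoid =
  fixes M :: "nat set"
  assumes zero_mem: "0 \<in> M" and add_mem: "a \<in> M \<Longrightarrow> b \<in> M \<Longrightarrow> a + b \<in> M"
begin

lemma mult_mem: "c \<in> M \<Longrightarrow> k * c \<in> M"
  by (induction k) (simp_all add: zero_mem add_mem)

lemma consecutive_mems:
  assumes "Gcd M = 1"
  obtains p where "p \<in> M" "p + 1 \<in> M"
proof -
  \<comment> \<open>the least positive difference of elements of M divides all of M, by Bezout\<close>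
  define D where "D = {d. \<exists>p\<in>M. p + d \<in> M}"
  have M_D: "c \<in> D" if "c \<in> M" for c
    using that zero_mem by (auto simp: D_def intro!: bexI[of _ 0])
  have gcd_D: "gcd c d \<in> D" if "c \<in> M" "c \<noteq> 0" "d \<in> D" for c d
  proof -
    obtain p where p: "p \<in> M" "p + d \<in> M" using \<open>d \<in> D\<close> by (auto simp: D_def)
    obtain x y where xy: "c * x = d * y + gcd c d" using bezout_nat[OF \<open>c \<noteq> 0\<close>] by blast
    have "y * p + d * y \<in> M" using mult_mem[OF p(2), of y] by (simp add: algebra_simps)
    moreover have "y * p + c * x \<in> M"
      using add_mem[OF mult_mem[OF p(1), of y] mult_mem[OF \<open>c \<in> M\<close>, of x]] by (simp add: mult.commute)
    then have "y * p + d * y + gcd c d \<in> M" using xy by (simp add: add.assoc)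
    ultimately show ?thesis by (auto simp: D_def)
  qed
  have "\<not> M \<subseteq> {0}" using assms Gcd_0_iff[of M] by simp
  then obtain c0 where c0: "c0 \<in> M" "c0 \<noteq> 0" by blast
  define d where "d = (LEAST d. d \<noteq> 0 \<and> d \<in> D)"
  have d: "d \<noteq> 0 \<and> d \<in> D"
    unfolding d_def by (rule LeastI[of _ c0]) (use c0 M_D in blast)
  have "d dvd c" if "c \<in> M" for c
  proof (cases "c = 0")
    case False
    have "gcd c d \<noteq> 0 \<and> gcd c d \<in> D" using False gcd_D[OF that False] d by simp
    then have "d \<le> gcd c d" unfolding d_def by (rule Least_le)
    then have "gcd c d = d" using d by (meson dvd_imp_le gcd_dvd2 le_antisym neq0_conv)
    then show ?thesis by (metis gcd_dvd1)
  qed simp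
  then have "d dvd Gcd M" by (rule Gcd_greatest)
  then have "1 \<in> D" using d assms by simp
  then show ?thesis using that by (auto simp: D_def)
qed

lemma eventually_mem:
  assumes "Gcd M = 1"
  shows "\<forall>\<^sub>F n in sequentially. n \<in> M"
proof -
  obtain p where p: "p \<in> M" "p + 1 \<in> M" using consecutive_mems[OF assms] .
  have "n \<in> M" if "p * p \<le> n" for n
    using nat_eq_comb_consecutive[OF that]
      add_mem[OF mult_mem[OF p(1), of "n div p - n mod p"] mult_mem[OF p(2), of "n mod p"]] by simp
  then show ?thesis by (rule eventually_sequentiallyI)
qed

end

section \<open>Primitive graphs\<close>

lemma has_path_trans:
  assumes "has_path E a u v" "has_path E b v w"
  shows "has_path E (a + b) u w"
proof -
  obtain q1 where q1: "q1 0 = u" "q1 a = v" "\<forall>i<a. \<exists>c. (q1 i, c, q1 (Suc i)) \<in> E"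
    using assms(1) unfolding has_path_def by blast
  obtain q2 where q2: "q2 0 = v" "q2 b = w" "\<forall>i<b. \<exists>c. (q2 i, c, q2 (Suc i)) \<in> E"
    using assms(2) unfolding has_path_def by blast
  define q where "q i = (if i \<le> a then q1 i else q2 (i - a))" for i
  have "\<exists>c. (q i, c, q (Suc i)) \<in> E" if "i < a + b" for i
  proof (cases "i < a")
    case False
    then have "q i = q2 (i - a)" "q (Suc i) = q2 (Suc (i - a))"
      using q1(2) q2(1) by (auto simp: q_def Suc_diff_le)
    then show ?thesis using q2(3) that False by simp
  qed (use q1 in \<open>auto simp: q_def\<close>)
  moreover have "q 0 = u" "q (a + b) = w" using q1 q2 by (auto simp: q_def)
  ultimately show ?thesis unfolding has_path_def by blast
qed

lemma primitive_graph_eventually_closed_path: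
  assumes "primitive_graph V E" and "v0 \<in> V"
  shows "\<forall>\<^sub>F n in sequentially. has_path E n v0 v0"
proof -
  have irr: "\<exists>n. has_path E n u v" if "u \<in> V" "v \<in> V" for u v
    using assms(1) that unfolding primitive_graph_def irreducible_graph_def by blast
  define C where "C = {n. has_path E n v0 v0}"
  have "Gcd C dvd n" if "n > 0" "u \<in> V" "has_path E n u u" for n u
  proof -
    obtain p q where "has_path E p v0 u" "has_path E q u v0" using irr assms(2) \<open>u \<in> V\<close> by blast
    then have "p + q \<in> C" "p + n + q \<in> C"
      using \<open>has_path E n u u\<close> by (auto simp: C_def intro: has_path_trans)
    then have "Gcd C dvd p + q" "Gcd C dvd n + (p + q)" by (auto intro: Gcd_dvd simp: ac_simps)
    then show ?thesis by (simp add: dvd_add_left_iff)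
  qed
  then have "Gcd C dvd Gcd {n. n > 0 \<and> (\<exists>u\<in>V. has_path E n u u)}"
    by (intro Gcd_greatest) blast
  then have "Gcd C = 1" using assms(1) unfolding primitive_graph_def by simp
  moreover have "add_submonoid C"
  proof
    show "0 \<in> C" by (simp add: C_def has_path_def exI[of _ "\<lambda>_. v0"])
  qed (auto simp: C_def intro: has_path_trans)
  ultimately have "\<forall>\<^sub>F n in sequentially. n \<in> C" by (rule add_submonoid.eventually_mem[rotated])
  then show ?thesis by (simp add: C_def)
qed

lemma primitive_graph_uniform_path_length:
  assumes "labeled_graph V E" and "primitive_graph V E"
  shows "\<exists>m. \<forall>u\<in>V. \<forall>v\<in>V. has_path E m u v"
proof (cases "V = {}")
  case False
  then obtain v0 where v0: "v0 \<in> V" by blast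
  obtain N where N: "\<And>n. n \<ge> N \<Longrightarrow> has_path E n v0 v0"
    using primitive_graph_eventually_closed_path[OF assms(2) v0] unfolding eventually_sequentially by blast
  have irr: "\<exists>n. has_path E n u v" if "u \<in> V" "v \<in> V" for u v
    using assms(2) that unfolding primitive_graph_def irreducible_graph_def by blast
  obtain to_v0 where to_v0: "\<forall>u\<in>V. has_path E (to_v0 u) u v0"
    using bchoice[of V "\<lambda>u n. has_path E n u v0"] irr v0 by blast
  obtain from_v0 where from_v0: "\<forall>u\<in>V. has_path E (from_v0 u) v0 u"
    using bchoice[of V "\<lambda>u n. has_path E n v0 u"] irr v0 by blast
  define P where "P = Max (to_v0 ` V \<union> from_v0 ` V)"
  have "finite V" using assms(1) by (simp add: labeled_graph_def)
  then have P: "to_v0 u \<le> P" "from_v0 u \<le> P" if "u \<in> V" for u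
    using that by (auto simp: P_def)
  have "has_path E (N + 2 * P) u v" if "u \<in> V" "v \<in> V" for u v
  proof -
    define L where "L = N + 2 * P - to_v0 u - from_v0 v"
    have "N \<le> L" "to_v0 u + L + from_v0 v = N + 2 * P"
      using P[OF that(1)] P[OF that(2)] by (simp_all add: L_def)
    moreover have "has_path E (to_v0 u + L + from_v0 v) u v"
      using to_v0 from_v0 that N[OF \<open>N \<le> L\<close>] by (blast intro: has_path_trans)
    ultimately show ?thesis by simp
  qed
  then show ?thesis by blast
qed simp

section \<open>Words of bi-infinite walks\<close>

definition window :: "(int \<Rightarrow> 'a) \<Rightarrow> int \<Rightarrow> nat \<Rightarrow> 'a list" where
  "window x k n = map (\<lambda>j. x (k + int j)) [0..<n]"

lemma lang_eq_windows: "lang X n = {window x k n | x k. x \<in> X}"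
  by (simp add: lang_def window_def)

lemma length_window [simp]: "length (window x k n) = n"
  by (simp add: window_def)

lemma window_add: "window x k (a + b) = window x k a @ window x (k + int a) b"
  by (induction b) (simp_all add: window_def add.assoc)

lemma lang_length: "w \<in> lang X n \<Longrightarrow> length w = n"
  by (auto simp: lang_eq_windows)

lemma finite_lang: "finite (lang (X :: (int \<Rightarrow> 'a::finite) set) n)"
proof (rule finite_subset)
  show "lang X n \<subseteq> {w. set w \<subseteq> UNIV \<and> length w = n}" using lang_length by blast
  show "finite {w :: 'a list. set w \<subseteq> UNIV \<and> length w = n}" by (rule finite_lists_length_eq) simp
qed

lemma lang_eq_empty_iff: "lang X n = {} \<longleftrightarrow> X = {}"
  by (auto simp: lang_eq_windows)

lemma lang_empty [simp]: "lang {} n = {}"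
  by (simp add: lang_eq_empty_iff)

lemma
  assumes "w \<in> lang X (a + b)"
  shows lang_take: "take a w \<in> lang X a" and lang_drop: "drop a w \<in> lang X b"
proof -
  obtain x k where "x \<in> X" "w = window x k a @ window x (k + int a) b"
    using assms by (auto simp: lang_eq_windows window_add)
  then have "take a w = window x k a" "drop a w = window x (k + int a) b" "x \<in> X" by simp_all
  then show "take a w \<in> lang X a" "drop a w \<in> lang X b" unfolding lang_eq_windows by blast+
qed

lemma lang_extend:
  assumes "u \<in> lang X a"
  obtains v where "length v = b" "u @ v \<in> lang X (a + b)"
proof -
  obtain x k where "u = window x k a" "x \<in> X" using assms by (auto simp: lang_eq_windows)
  then have "u @ window x (k + int a) b \<in> lang X (a + b)"
    by (auto simp: lang_eq_windows window_add)
  then show ?thesis using that[of "window x (k + int a) b"] by simp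
qed

definition splice_at :: "int \<Rightarrow> (int \<Rightarrow> 'b) \<Rightarrow> (int \<Rightarrow> 'b) \<Rightarrow> int \<Rightarrow> 'b" where
  "splice_at K f g i = (if i < K then f i else g i)"

lemma window_splice_at:
  "window (splice_at (k + int a) f g) k (a + b) = window f k a @ window g (k + int a) b"
proof -
  have "window (splice_at (k + int a) f g) k a = window f k a"
    by (simp add: window_def splice_at_def)
  moreover have "window (splice_at (k + int a) f g) (k + int a) b = window g (k + int a) b"
    by (simp add: window_def splice_at_def)
  ultimately show ?thesis by (simp add: window_add)
qed

definition walk_on :: "('v \<times> 'a \<times> 'v) set \<Rightarrow> int set \<Rightarrow> (int \<Rightarrow> 'v) \<Rightarrow> (int \<Rightarrow> 'a) \<Rightarrow> bool" where
  "walk_on E I p x \<longleftrightarrow> (\<forall>i\<in>I. (p i, x i, p (i + 1)) \<in> E)"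

lemma presented_iff_walk_on: "x \<in> presented E \<longleftrightarrow> (\<exists>p. walk_on E UNIV p x)"
  by (simp add: presented_def walk_on_def)

lemma walk_on_splice_at:
  assumes "walk_on E A p x" "walk_on E B p' x'" "A \<subseteq> {..<K}" "B \<subseteq> {K..}" "p K = p' K"
  shows "walk_on E (A \<union> B) (splice_at K p p') (splice_at K x x')"
  unfolding walk_on_def
proof
  fix i assume "i \<in> A \<union> B"
  then show "(splice_at K p p' i, splice_at K x x' i, splice_at K p p' (i + 1)) \<in> E"
  proof
    assume "i \<in> A"
    then have "i < K" using assms(3) by auto
    then show ?thesis using assms(1,5) \<open>i \<in> A\<close>
      by (cases "i + 1 = K") (auto simp: walk_on_def splice_at_def)
  next
    assume "i \<in> B"
    then show ?thesis using assms(2,4) by (auto simp: walk_on_def splice_at_def)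
  qed
qed

lemma walk_on_shift: "walk_on E UNIV p x \<Longrightarrow> walk_on E I (\<lambda>i. p (i + d)) (\<lambda>i. x (i + d))"
  unfolding walk_on_def by (metis UNIV_I add.commute add.left_commute)

lemma has_path_walk_on:
  assumes "has_path E m u v"
  obtains q c where "walk_on E {K..<K + int m} q c" "q K = u" "q (K + int m) = v"
proof -
  obtain q where q: "q 0 = u" "q m = v" "\<forall>i<m. \<exists>c. (q i, c, q (Suc i)) \<in> E"
    using assms unfolding has_path_def by blast
  then obtain c where c: "\<And>i. i < m \<Longrightarrow> (q i, c i, q (Suc i)) \<in> E" by metis
  have "walk_on E {K..<K + int m} (\<lambda>i. q (nat (i - K))) (\<lambda>i. c (nat (i - K)))"
  proof (unfold walk_on_def, intro ballI)
    fix i assume "i \<in> {K..<K + int m}"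
    then have "nat (i - K) < m" "nat (i + 1 - K) = Suc (nat (i - K))" by auto
    then show "(q (nat (i - K)), c (nat (i - K)), q (nat (i + 1 - K))) \<in> E" using c by simp
  qed
  then show ?thesis using that q(1,2) by simp
qed

definition gap_joinable :: "(int \<Rightarrow> 'a) set \<Rightarrow> nat \<Rightarrow> bool" where
  "gap_joinable Z m \<longleftrightarrow> (\<forall>a b u v. u \<in> lang Z a \<longrightarrow> v \<in> lang Z b \<longrightarrow>
     (\<exists>w. length w = m \<and> u @ w @ v \<in> lang Z (a + m + b)))"

lemma gap_joinable_presented:
  assumes "E \<subseteq> V \<times> UNIV \<times> V" and "\<forall>u\<in>V. \<forall>v\<in>V. has_path E m u v"
  shows "gap_joinable (presented E) m"
  unfolding gap_joinable_def
proof (intro allI impI)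
  fix a b u v
  assume "u \<in> lang (presented E) a" "v \<in> lang (presented E) b"
  then obtain y k z l p p' where u: "u = window y k a" and v: "v = window z l b"
    and p: "walk_on E UNIV p y" and p': "walk_on E UNIV p' z"
    by (auto simp: lang_eq_windows presented_iff_walk_on)
  \<comment> \<open>splice the walk of u, a connecting path of length m and a shifted walk of v\<close>
  define K where "K = k + int a"
  define d where "d = l - (K + int m)"
  have "p K \<in> V" "p' l \<in> V" using p p' assms(1) by (auto simp: walk_on_def)
  then obtain q c where q: "walk_on E {K..<K + int m} q c" "q K = p K" "q (K + int m) = p' l"
    using assms(2) has_path_walk_on by metis
  have left: "walk_on E ({..<K} \<union> {K..<K + int m}) (splice_at K p q) (splice_at K y c)"
    using p q by (intro walk_on_splice_at) (auto simp: walk_on_def)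
  have right: "walk_on E {K + int m..} (\<lambda>i. p' (i + d)) (\<lambda>i. z (i + d))"
    using p' by (rule walk_on_shift)
  define s where "s = splice_at (K + int m) (splice_at K y c) (\<lambda>i. z (i + d))"
  have "walk_on E ({..<K} \<union> {K..<K + int m} \<union> {K + int m..})
      (splice_at (K + int m) (splice_at K p q) (\<lambda>i. p' (i + d))) s"
    unfolding s_def using q by (intro walk_on_splice_at[OF left right]) (auto simp: splice_at_def d_def)
  moreover have "{..<K} \<union> {K..<K + int m} \<union> {K + int m..} = UNIV" by auto
  ultimately have "s \<in> presented E" by (auto simp: presented_iff_walk_on)
  have "K + int m = k + int (a + m)" by (simp add: K_def)
  then have "window s k (a + m + b)
      = window (splice_at K y c) k (a + m) @ window (\<lambda>i. z (i + d)) (K + int m) b"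
    unfolding s_def by (simp only: window_splice_at)
  also have "\<dots> = u @ window c K m @ v"
    unfolding K_def u v window_splice_at by (simp add: window_def d_def K_def algebra_simps)
  finally have "u @ window c K m @ v \<in> lang (presented E) (a + m + b)"
    using \<open>s \<in> presented E\<close> unfolding lang_eq_windows by (blast intro: sym)
  then show "\<exists>w. length w = m \<and> u @ w @ v \<in> lang (presented E) (a + m + b)"
    by (intro exI[of _ "window c K m"]) simp
qed

lemma gap_joinable_if_primitive_system:
  assumes "primitive_system Z"
  obtains m where "gap_joinable Z m"
proof -
  obtain V :: "nat set" and E where "labeled_graph V E" "primitive_graph V E" "Z = presented E"
    using assms unfolding primitive_system_def by blast
  moreover from this obtain m where "\<forall>u\<in>V. \<forall>v\<in>V. has_path E m u v"
    using primitive_graph_uniform_path_length by blast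
  ultimately have "gap_joinable Z m"
    using gap_joinable_presented[of E V m] by (simp add: labeled_graph_def)
  then show ?thesis by (rule that)
qed

section \<open>Covering radii of languages\<close>

lemma hamming_le_length: "hamming u v \<le> length u"
  unfolding hamming_def by (rule card_mono[of "{..<length u}", simplified]) auto

lemma hamming_append:
  assumes "length u1 = length v1"
  shows "hamming (u1 @ u2) (v1 @ v2) = hamming u1 v1 + hamming u2 v2"
proof -
  define D1 where "D1 = {i. i < length u1 \<and> i < length v1 \<and> u1 ! i \<noteq> v1 ! i}"
  define D2 where "D2 = {i. i < length u2 \<and> i < length v2 \<and> u2 ! i \<noteq> v2 ! i}"
  have "{i. i < length (u1 @ u2) \<and> i < length (v1 @ v2) \<and> (u1 @ u2) ! i \<noteq> (v1 @ v2) ! i}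
      = D1 \<union> (\<lambda>i. i + length u1) ` D2"
  proof (intro set_eqI iffI)
    fix i
    assume i: "i \<in> {i. i < length (u1 @ u2) \<and> i < length (v1 @ v2) \<and> (u1 @ u2) ! i \<noteq> (v1 @ v2) ! i}"
    show "i \<in> D1 \<union> (\<lambda>i. i + length u1) ` D2"
    proof (cases "i < length u1")
      case False
      then have "i - length u1 \<in> D2" "i = i - length u1 + length u1"
        using i assms by (auto simp: D2_def nth_append)
      then show ?thesis by blast
    qed (use i assms in \<open>auto simp: D1_def nth_append\<close>)
  qed (use assms in \<open>auto simp: D1_def D2_def nth_append\<close>)
  moreover have "card (D1 \<union> (\<lambda>i. i + length u1) ` D2) = card D1 + card D2"
    by (subst card_Un_disjoint) (auto simp: D1_def D2_def card_image)
  ultimately show ?thesis by (simp add: hamming_def D1_def D2_def)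
qed

lemma hamming_take_drop:
  assumes "length u = length v"
  shows "hamming u v = hamming (take n u) (take n v) + hamming (drop n u) (drop n v)"
  using hamming_append[of "take n u" "take n v" "drop n u" "drop n v"] assms by simp

lemma covering_radius_le_iff:
  assumes "finite C" "C \<noteq> {}" "finite A" "A \<noteq> {}"
  shows "covering_radius C A \<le> r \<longleftrightarrow> (\<forall>y\<in>A. \<exists>x\<in>C. hamming x y \<le> r)"
  using assms by (simp add: covering_radius_def Max_le_iff Min_le_iff)

lemma le_covering_radius_iff:
  assumes "finite C" "C \<noteq> {}" "finite A" "A \<noteq> {}"
  shows "r \<le> covering_radius C A \<longleftrightarrow> (\<exists>y\<in>A. \<forall>x\<in>C. r \<le> hamming x y)"
  using assms by (simp add: covering_radius_def Max_ge_iff Min_ge_iff)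

abbreviation lang_radius :: "(int \<Rightarrow> 'a) set \<Rightarrow> (int \<Rightarrow> 'a) set \<Rightarrow> nat \<Rightarrow> nat" where
  "lang_radius X Y n \<equiv> covering_radius (lang X n) (lang Y n)"

text \<open>Min and Max of the empty set are unspecified, but the same for every length.\<close>

lemma lang_radius_empty:
  assumes "X = {} \<or> Y = {}"
  shows "lang_radius X Y n = lang_radius X Y 0"
proof (cases "Y = {}")
  case False
  then have "lang Y n \<noteq> {}" "lang Y 0 \<noteq> {}" by (simp_all add: lang_eq_empty_iff)
  then show ?thesis using assms False by (simp add: covering_radius_def image_constant_conv)
qed (simp add: covering_radius_def)

context
  fixes X Y :: "(int \<Rightarrow> 'a::finite) set"
  assumes X: "X \<noteq> {}" and Y: "Y \<noteq> {}"
begin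

lemma lang_radius_le_iff:
  "lang_radius X Y n \<le> r \<longleftrightarrow> (\<forall>y\<in>lang Y n. \<exists>x\<in>lang X n. hamming x y \<le> r)"
  using X Y by (simp add: covering_radius_le_iff finite_lang lang_eq_empty_iff)

lemma le_lang_radius_iff:
  "r \<le> lang_radius X Y n \<longleftrightarrow> (\<exists>y\<in>lang Y n. \<forall>x\<in>lang X n. r \<le> hamming x y)"
  using X Y by (simp add: le_covering_radius_iff finite_lang lang_eq_empty_iff)

lemma lang_radius_le_length: "lang_radius X Y n \<le> n"
proof -
  obtain x where x: "x \<in> lang X n" using X lang_eq_empty_iff by blast
  have "hamming x y \<le> n" for y using hamming_le_length[of x y] lang_length[OF x] by simp
  then show ?thesis unfolding lang_radius_le_iff using x by blast
qed

lemma lang_radius_mono: "lang_radius X Y a \<le> lang_radius X Y (a + b)"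
proof -
  obtain y where y: "y \<in> lang Y a" "\<forall>x\<in>lang X a. lang_radius X Y a \<le> hamming x y"
    using le_lang_radius_iff by blast
  obtain v where v: "length v = b" "y @ v \<in> lang Y (a + b)" using lang_extend[OF y(1)] .
  have "lang_radius X Y a \<le> hamming x (y @ v)" if "x \<in> lang X (a + b)" for x
  proof -
    have "lang_radius X Y a \<le> hamming (take a x) y" using y(2) lang_take[OF that] by blast
    also have "\<dots> \<le> hamming x (y @ v)"
      using hamming_take_drop[of x "y @ v" a] lang_length[OF that] lang_length[OF y(1)] v(1) by simp
    finally show ?thesis .
  qed
  then show ?thesis unfolding le_lang_radius_iff using v(2) by blast
qed

lemma lang_radius_add_le: "lang_radius X Y (a + b) \<le> lang_radius X Y a + b"
  unfolding lang_radius_le_iff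
proof
  fix y assume y: "y \<in> lang Y (a + b)"
  obtain x where x: "x \<in> lang X a" "hamming x (take a y) \<le> lang_radius X Y a"
    using lang_radius_le_iff[of a "lang_radius X Y a"] lang_take[OF y] by blast
  obtain v where v: "length v = b" "x @ v \<in> lang X (a + b)" using lang_extend[OF x(1)] .
  have "hamming (x @ v) y = hamming x (take a y) + hamming v (drop a y)"
    using hamming_take_drop[of "x @ v" y a] lang_length[OF x(1)] lang_length[OF y] v(1) by simp
  also have "\<dots> \<le> lang_radius X Y a + b"
    using add_mono[OF x(2) hamming_le_length[of v "drop a y"]] v(1) by simp
  finally show "\<exists>x\<in>lang X (a + b). hamming x y \<le> lang_radius X Y a + b" using v(2) by blast
qed

lemma lang_radius_superadditive:
  assumes "gap_joinable Y m"
  shows "lang_radius X Y a + lang_radius X Y b \<le> lang_radius X Y (a + m + b)"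
proof -
  obtain y1 where y1: "y1 \<in> lang Y a" "\<forall>x\<in>lang X a. lang_radius X Y a \<le> hamming x y1"
    using le_lang_radius_iff by blast
  obtain y2 where y2: "y2 \<in> lang Y b" "\<forall>x\<in>lang X b. lang_radius X Y b \<le> hamming x y2"
    using le_lang_radius_iff by blast
  obtain w where w: "length w = m" "y1 @ w @ y2 \<in> lang Y (a + m + b)"
    using assms y1(1) y2(1) unfolding gap_joinable_def by blast
  have "lang_radius X Y a + lang_radius X Y b \<le> hamming x (y1 @ w @ y2)"
    if x: "x \<in> lang X (a + m + b)" for x
  proof -
    have "take a x \<in> lang X a" "drop (a + m) x \<in> lang X b"
      using lang_take[of x X a "m + b"] lang_drop[of x X "a + m" b] x by (simp_all add: add.assoc)
    then have "lang_radius X Y a + lang_radius X Y b \<le> hamming (take a x) y1 + hamming (drop (a + m) x) y2"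
      using y1(2) y2(2) by (simp add: add_mono)
    also have "\<dots> \<le> hamming x (y1 @ w @ y2)"
      using hamming_take_drop[of x "y1 @ w @ y2" a] hamming_take_drop[of "drop a x" "w @ y2" m]
        lang_length[OF x] lang_length[OF y1(1)] lang_length[OF y2(1)] w(1) by (simp add: add.commute)
    finally show ?thesis .
  qed
  then show ?thesis unfolding le_lang_radius_iff using w(2) by blast
qed

lemma lang_radius_subadditive:
  assumes "gap_joinable X m"
  shows "lang_radius X Y (a + m + b) \<le> lang_radius X Y a + lang_radius X Y b + m"
  unfolding lang_radius_le_iff
proof
  fix y assume y: "y \<in> lang Y (a + m + b)"
  have "take a y \<in> lang Y a" "drop (a + m) y \<in> lang Y b"
    using lang_take[of y Y a "m + b"] lang_drop[of y Y "a + m" b] y by (simp_all add: add.assoc)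
  then obtain x1 x2 where
    x1: "x1 \<in> lang X a" "hamming x1 (take a y) \<le> lang_radius X Y a" and
    x2: "x2 \<in> lang X b" "hamming x2 (drop (a + m) y) \<le> lang_radius X Y b"
    using lang_radius_le_iff by blast
  obtain w where w: "length w = m" "x1 @ w @ x2 \<in> lang X (a + m + b)"
    using assms x1(1) x2(1) unfolding gap_joinable_def by blast
  have "hamming (x1 @ w @ x2) y
      = hamming x1 (take a y) + hamming w (take m (drop a y)) + hamming x2 (drop (a + m) y)"
    using hamming_take_drop[of "x1 @ w @ x2" y a] hamming_take_drop[of "w @ x2" "drop a y" m]
      lang_length[OF x1(1)] lang_length[OF x2(1)] lang_length[OF y] w(1) by (simp add: add.commute)
  also have "\<dots> \<le> lang_radius X Y a + lang_radius X Y b + m"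
    using add_mono[OF add_mono[OF x1(2) hamming_le_length[of w "take m (drop a y)"]] x2(2)] w(1)
    by linarith
  finally show "\<exists>x\<in>lang X (a + m + b). hamming x y \<le> lang_radius X Y a + lang_radius X Y b + m"
    using w(2) by blast
qed

lemma convergent_lang_radius_if_gap_joinable_right:
  assumes "gap_joinable Y m"
  shows "convergent (\<lambda>n. real (lang_radius X Y n) / real n)"
proof (rule convergent_superadditive_with_gap)
  show "mono (lang_radius X Y)"
  proof (rule monoI)
    fix i j :: nat assume "i \<le> j"
    then show "lang_radius X Y i \<le> lang_radius X Y j" using lang_radius_mono[of i "j - i"] by simp
  qed
qed (use lang_radius_le_length lang_radius_superadditive[OF assms] in auto)

lemma convergent_lang_radius_if_gap_joinable_left:
  assumes "gap_joinable X m"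
  shows "convergent (\<lambda>n. real (lang_radius X Y n) / real n)"
proof -
  define s where "s n = n - lang_radius X Y n" for n
  have "convergent (\<lambda>n. real (s n) / real n)"
  proof (rule convergent_superadditive_with_gap)
    show "mono s"
    proof (rule monoI)
      fix i j :: nat assume "i \<le> j"
      then have "lang_radius X Y j \<le> lang_radius X Y i + (j - i)"
        using lang_radius_add_le[of i "j - i"] by simp
      then show "s i \<le> s j"
        using \<open>i \<le> j\<close> lang_radius_le_length[of i] lang_radius_le_length[of j] unfolding s_def by arith
    qed
    show "s a + s b \<le> s (a + m + b)" for a b
      using lang_radius_subadditive[OF assms, of a b] lang_radius_le_length[of a]
        lang_radius_le_length[of b] lang_radius_le_length[of "a + m + b"] by (simp add: s_def)
  qed (simp add: s_def)
  then obtain L where "(\<lambda>n. real (s n) / real n) \<longlonglongrightarrow> L" by (auto simp: convergent_def)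
  then have "(\<lambda>n. 1 - real (s n) / real n) \<longlonglongrightarrow> 1 - L" by (intro tendsto_intros)
  moreover have "\<forall>\<^sub>F n in sequentially. 1 - real (s n) / real n = real (lang_radius X Y n) / real n"
    using eventually_gt_at_top[of 0]
    by eventually_elim (simp add: s_def of_nat_diff lang_radius_le_length diff_divide_distrib)
  ultimately show ?thesis by (auto intro: convergentI dest: Lim_transform_eventually)
qed

end

theorem proposition7:
  fixes X Y :: "(int \<Rightarrow> 'a::finite) set"
  assumes "constrained_system X" and "constrained_system Y"
    and "primitive_system X \<or> primitive_system Y"
  shows "convergent (\<lambda>n. real (covering_radius (lang X n) (lang Y n)) / real n)
    \<and> R_shift X Y = ereal (lim (\<lambda>n. real (covering_radius (lang X n) (lang Y n)) / real n))"
proof -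
  have "convergent (\<lambda>n. real (lang_radius X Y n) / real n)"
  proof (cases "X = {} \<or> Y = {}")
    case True
    then obtain c where "\<And>n. lang_radius X Y n = c" using lang_radius_empty by blast
    then show ?thesis using lim_const_over_n[of "real c"] by (simp add: convergentI)
  next
    case False
    from assms(3) show ?thesis
    proof
      assume "primitive_system X"
      then obtain m where "gap_joinable X m" by (rule gap_joinable_if_primitive_system)
      with False show ?thesis by (intro convergent_lang_radius_if_gap_joinable_left) auto
    next
      assume "primitive_system Y"
      then obtain m where "gap_joinable Y m" by (rule gap_joinable_if_primitive_system)
      with False show ?thesis by (intro convergent_lang_radius_if_gap_joinable_right) auto
    qed
  qed
  then show ?thesis
    by (simp add: R_shift_def convergent_LIMSEQ_iff lim_imp_Liminf)
qed

end
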